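(* Let $F$ be $\mathbb{C}$ or $\mathbb{R}$ and let $\mathfrak{L}$ be a solvable (left) Leibniz algebra over $F$ of dimension $r+1$ whose nilradical is the $r$-dimensional abelian algebra $A(r)$. Let $\{n_1,\dots,n_r,x\}$ be a basis of $\mathfrak{L}$ with $n_1,\dots,n_r$ a basis of $A(r)$ and $x\notin A(r)$, and write $$[x,n_i]=\sum_{j} L_{ij}n_j,\qquad [n_i,x]=\sum_j R_{ij}n_j,\qquad [x,x]=\sum_j\sigma_j n_j,$$ with $L,R\in F^{r\times r}$, $\sigma=(\sigma_1,\dots,\sigma_r)^T\in F^r$. Assume the basis $n_1,\dots,n_r$ is chosen so that $R$ is in Jordan canonical form (block diagonal, each block upper triangular with a single eigenvalue on the diagonal and $1$'s on the superdiagonal). Then: (1) $\sigma$ lies in the null space of $R^T$, i.e. $R^T\sigma=0$; (2) for all $i,j$, if $R_{ij}\neq 0$ then $\sigma_i=0$.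
   Context: A (left) Leibniz algebra is a vector space with bilinear product satisfying $[x,[y,z]]=[[x,y],z]+[y,[x,z]]$. Solvable: derived series $\mathfrak{L}^{(1)}=[\mathfrak{L},\mathfrak{L}]$, $\mathfrak{L}^{(n+1)}=[\mathfrak{L}^{(n)},\mathfrak{L}^{(n)}]$ eventually zero. Nilradical: the unique maximal nilpotent ideal (nilpotent meaning the lower central series $\mathfrak{L}^2=[\mathfrak{L},\mathfrak{L}]$, $\mathfrak{L}^{k+1}=[\mathfrak{L},\mathfrak{L}^k]$ eventually vanishes). $A(r)$ is the $r$-dimensional algebra with all products zero. *)

theory Defs
  imports Complex_Main
begin

definition leibniz_algebra ::
  "('a::field \<Rightarrow> 'v::ab_group_add \<Rightarrow> 'v) \<Rightarrow> ('v \<Rightarrow> 'v \<Rightarrow> 'v) \<Rightarrow> bool" where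
  "leibniz_algebra scale b \<longleftrightarrow>
     vector_space scale \<and>
     (\<forall>u v w. b (u + v) w = b u w + b v w) \<and>
     (\<forall>u v w. b u (v + w) = b u v + b u w) \<and>
     (\<forall>c u v. b (scale c u) v = scale c (b u v)) \<and>
     (\<forall>c u v. b u (scale c v) = scale c (b u v)) \<and>
     (\<forall>x y z. b x (b y z) = b (b x y) z + b y (b x z))"

definition brk ::
  "('a::field \<Rightarrow> 'v::ab_group_add \<Rightarrow> 'v) \<Rightarrow> ('v \<Rightarrow> 'v \<Rightarrow> 'v) \<Rightarrow> 'v set \<Rightarrow> 'v set \<Rightarrow> 'v set" where
  "brk scale b A B = module.span scale {b u v | u v. u \<in> A \<and> v \<in> B}"

fun derived ::
  "('a::field \<Rightarrow> 'v::ab_group_add \<Rightarrow> 'v) \<Rightarrow> ('v \<Rightarrow> 'v \<Rightarrow> 'v) \<Rightarrow> nat \<Rightarrow> 'v set" where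
  "derived scale b 0 = UNIV"
| "derived scale b (Suc k) = brk scale b (derived scale b k) (derived scale b k)"

definition solvable ::
  "('a::field \<Rightarrow> 'v::ab_group_add \<Rightarrow> 'v) \<Rightarrow> ('v \<Rightarrow> 'v \<Rightarrow> 'v) \<Rightarrow> bool" where
  "solvable scale b \<longleftrightarrow> (\<exists>k. derived scale b k = {0})"

definition lideal ::
  "('a::field \<Rightarrow> 'v::ab_group_add \<Rightarrow> 'v) \<Rightarrow> ('v \<Rightarrow> 'v \<Rightarrow> 'v) \<Rightarrow> 'v set \<Rightarrow> bool" where
  "lideal scale b I \<longleftrightarrow> module.subspace scale I \<and> (\<forall>u\<in>I. \<forall>v. b u v \<in> I \<and> b v u \<in> I)"

text \<open>Lower central series of a subalgebra I (as an algebra in its own right):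
  lcs 0 = I (i.e. I^1), lcs (k+1) = [I, lcs k].\<close>
fun lcs ::
  "('a::field \<Rightarrow> 'v::ab_group_add \<Rightarrow> 'v) \<Rightarrow> ('v \<Rightarrow> 'v \<Rightarrow> 'v) \<Rightarrow> 'v set \<Rightarrow> nat \<Rightarrow> 'v set" where
  "lcs scale b I 0 = I"
| "lcs scale b I (Suc k) = brk scale b I (lcs scale b I k)"

definition nilpotent_sub ::
  "('a::field \<Rightarrow> 'v::ab_group_add \<Rightarrow> 'v) \<Rightarrow> ('v \<Rightarrow> 'v \<Rightarrow> 'v) \<Rightarrow> 'v set \<Rightarrow> bool" where
  "nilpotent_sub scale b I \<longleftrightarrow> (\<exists>k. lcs scale b I k = {0})"

definition is_nilradical ::
  "('a::field \<Rightarrow> 'v::ab_group_add \<Rightarrow> 'v) \<Rightarrow> ('v \<Rightarrow> 'v \<Rightarrow> 'v) \<Rightarrow> 'v set \<Rightarrow> bool" where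
  "is_nilradical scale b N \<longleftrightarrow>
     lideal scale b N \<and> nilpotent_sub scale b N \<and>
     (\<forall>J. lideal scale b J \<and> nilpotent_sub scale b J \<longrightarrow> J \<subseteq> N)"

text \<open>An r x r matrix (indices 1..r) is in Jordan canonical form: all entries vanish
  except the diagonal and superdiagonal; each superdiagonal entry is 0 or 1, and when it
  is 1 the two adjacent diagonal entries coincide (same Jordan block).\<close>
definition jordan_form :: "nat \<Rightarrow> (nat \<Rightarrow> nat \<Rightarrow> 'a::field) \<Rightarrow> bool" where
  "jordan_form r M \<longleftrightarrow>
     (\<forall>i\<in>{1..r}. \<forall>j\<in>{1..r}. j \<noteq> i \<and> j \<noteq> i + 1 \<longrightarrow> M i j = 0) \<and>
     (\<forall>i. 1 \<le> i \<and> i < r \<longrightarrow>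
        M i (i + 1) = 0 \<or> (M i (i + 1) = 1 \<and> M i i = M (i + 1) (i + 1)))"

definition field_iso :: "('a::field \<Rightarrow> 'b::field) \<Rightarrow> bool" where
  "field_iso h \<longleftrightarrow> bij h \<and> (\<forall>u v. h (u + v) = h u + h v) \<and> (\<forall>u v. h (u * v) = h u * h v)"

end

theory Submission
  imports Defs
begin

text \<open>The left Leibniz identity with all three arguments equal to x gives [[x,x],x] = 0.
  Expanding [x,x] and [n_j,x] in the basis n_1, ..., n_r turns this into sigma^T R = 0.
  For a Jordan matrix R, column k of this system reads
  R_kk sigma_k + R_(k-1)k sigma_(k-1) = 0, and an induction along each Jordan block shows
  that sigma_i vanishes whenever row i of R is nonzero.\<close>

lemma leibniz_bracket_add_left:
  "leibniz_algebra scale b \<Longrightarrow> b (u + v) w = b u w + b v w"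
  unfolding leibniz_algebra_def by blast

lemma leibniz_bracket_scale_left:
  "leibniz_algebra scale b \<Longrightarrow> b (scale c u) v = scale c (b u v)"
  unfolding leibniz_algebra_def by blast

lemma leibniz_bracket_sum_left:
  assumes "leibniz_algebra scale b" and "finite A"
  shows "b (sum f A) w = (\<Sum>a\<in>A. b (f a) w)"
  using assms(2)
proof (induction A rule: finite_induct)
  case empty
  have "b (0 + 0) w = b 0 w + b 0 w"
    by (rule leibniz_bracket_add_left[OF assms(1)])
  then show ?case by simp
qed (simp add: leibniz_bracket_add_left[OF assms(1)])

lemma leibniz_square_bracket_right:
  assumes "leibniz_algebra scale b"
  shows "b (b x x) x = 0"
proof -
  have "b x (b x x) = b (b x x) x + b x (b x x)"
    using assms unfolding leibniz_algebra_def by blast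
  then show ?thesis by simp
qed

lemma leibniz_square_bracket_right_coords:
  fixes scale :: "'a::field \<Rightarrow> 'v::ab_group_add \<Rightarrow> 'v" and r :: nat
  assumes leib: "leibniz_algebra scale b"
    and R_def: "\<forall>i\<in>{1..r}. b (n i) x = (\<Sum>j=1..r. scale (R i j) (n j))"
    and sigma_def: "b x x = (\<Sum>j=1..r. scale (\<sigma> j) (n j))"
  shows "(\<Sum>k=1..r. scale (\<Sum>i=1..r. R i k * \<sigma> i) (n k)) = 0"
proof -
  interpret vector_space scale
    using leib unfolding leibniz_algebra_def by blast
  have "b (b x x) x = (\<Sum>i=1..r. scale (\<sigma> i) (\<Sum>k=1..r. scale (R i k) (n k)))"
    unfolding sigma_def
    by (simp add: leibniz_bracket_sum_left[OF leib] leibniz_bracket_scale_left[OF leib] R_def)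
  also have "\<dots> = (\<Sum>i=1..r. \<Sum>k=1..r. scale (R i k * \<sigma> i) (n k))"
    by (simp add: scale_sum_right mult.commute)
  also have "\<dots> = (\<Sum>k=1..r. scale (\<Sum>i=1..r. R i k * \<sigma> i) (n k))"
    by (subst sum.swap) (simp add: scale_sum_left)
  finally show ?thesis
    using leibniz_square_bracket_right[OF leib] by simp
qed

lemma (in module) independent_image_coeffs_zero:
  assumes "independent (n ` I)" and "inj_on n I" and "finite I"
    and "(\<Sum>k\<in>I. scale (c k) (n k)) = 0" and "k \<in> I"
  shows "c k = 0"
proof -
  define u where "u v = c (the_inv_into I n v)" for v
  have "(\<Sum>v\<in>n ` I. scale (u v) v) = (\<Sum>k\<in>I. scale (c k) (n k))"
    by (simp add: sum.reindex[OF assms(2)] u_def the_inv_into_f_f[OF assms(2)])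
  then have "u (n k) = 0"
    using assms by (intro independentD[where t = "n ` I"]) auto
  then show ?thesis
    using assms(5) by (simp add: u_def the_inv_into_f_f[OF assms(2)])
qed

lemma jordan_form_entry_zero:
  "jordan_form r M \<Longrightarrow> i \<in> {1..r} \<Longrightarrow> j \<in> {1..r} \<Longrightarrow> j \<noteq> i \<Longrightarrow> j \<noteq> i + 1 \<Longrightarrow> M i j = 0"
  unfolding jordan_form_def by blast

lemma jordan_form_superdiag:
  "jordan_form r M \<Longrightarrow> 1 \<le> i \<Longrightarrow> i < r \<Longrightarrow>
    M i (i + 1) = 0 \<or> (M i (i + 1) = 1 \<and> M i i = M (i + 1) (i + 1))"
  unfolding jordan_form_def by blast

lemma jordan_form_column_sum:
  assumes J: "jordan_form r M" and k: "k \<in> {1..r}"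
  shows "(\<Sum>i=1..r. M i k * v i) = M k k * v k + (if 2 \<le> k then M (k - 1) k * v (k - 1) else 0)"
proof -
  let ?S = "{k} \<union> (if 2 \<le> k then {k - 1} else {})"
  have "(\<Sum>i=1..r. M i k * v i) = (\<Sum>i\<in>?S. M i k * v i)"
  proof (rule sum.mono_neutral_right)
    show "\<forall>i\<in>{1..r} - ?S. M i k * v i = 0"
      using jordan_form_entry_zero[OF J _ k] by (auto split: if_splits)
  qed (use k in auto)
  then show ?thesis
    by (cases "2 \<le> k") auto
qed

lemma jordan_form_left_null_diag:
  assumes J: "jordan_form r M"
    and null: "\<forall>j\<in>{1..r}. (\<Sum>i=1..r. M i j * v i) = 0"
  shows "i \<in> {1..r} \<Longrightarrow> M i i \<noteq> 0 \<Longrightarrow> v i = 0"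
proof (induction i rule: less_induct)
  case (less i)
  have column: "M i i * v i + (if 2 \<le> i then M (i - 1) i * v (i - 1) else 0) = 0"
    using null less.prems(1) jordan_form_column_sum[OF J less.prems(1), of v] by metis
  have "(if 2 \<le> i then M (i - 1) i * v (i - 1) else 0) = 0"
  proof (cases "2 \<le> i \<and> M (i - 1) i \<noteq> 0")
    case True
    then have "M (i - 1) (i - 1) = M i i"
      using jordan_form_superdiag[OF J, of "i - 1"] less.prems(1) by auto
    moreover have "i - 1 \<in> {1..r}" "i - 1 < i"
      using True less.prems(1) by auto
    ultimately have "v (i - 1) = 0"
      using less.prems(2) less.IH[of "i - 1"] by simp
    then show ?thesis by simp
  qed auto
  then show ?case
    using column less.prems(2) by simp
qed

lemma jordan_form_left_null_row:
  assumes J: "jordan_form r M"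
    and null: "\<forall>j\<in>{1..r}. (\<Sum>i=1..r. M i j * v i) = 0"
    and i: "i \<in> {1..r}" and j: "j \<in> {1..r}" and Mij: "M i j \<noteq> 0"
  shows "v i = 0"
proof (cases "M i i = 0")
  case True
  then have ji: "j = i + 1"
    using jordan_form_entry_zero[OF J i j] Mij by (cases "j = i") auto
  then have "M i (i + 1) = 1" and "M (i + 1) (i + 1) = 0"
    using jordan_form_superdiag[OF J, of i] i j Mij True by auto
  moreover have "M (i + 1) (i + 1) * v (i + 1) + M i (i + 1) * v i = 0"
    using null j ji jordan_form_column_sum[OF J, of "i + 1" v] i by auto
  ultimately show ?thesis
    by simp
qed (use jordan_form_left_null_diag[OF J null] i in blast)

theorem lemma4p1:
  fixes scale :: "'a::field \<Rightarrow> 'v::ab_group_add \<Rightarrow> 'v"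
    and b :: "'v \<Rightarrow> 'v \<Rightarrow> 'v"
    and r :: nat
    and n :: "nat \<Rightarrow> 'v" and x :: 'v
    and L R :: "nat \<Rightarrow> nat \<Rightarrow> 'a" and \<sigma> :: "nat \<Rightarrow> 'a"
  assumes F_R_or_C: "(\<exists>h::'a \<Rightarrow> real. field_iso h) \<or> (\<exists>h::'a \<Rightarrow> complex. field_iso h)"
    and leib: "leibniz_algebra scale b"
    and solv: "solvable scale b"
    and inj_n: "inj_on n {1..r}"
    and x_notin: "x \<notin> module.span scale (n ` {1..r})"
    and basis_indep: "\<not> module.dependent scale (insert x (n ` {1..r}))"
    and basis_span: "module.span scale (insert x (n ` {1..r})) = UNIV"
    and nilrad: "is_nilradical scale b (module.span scale (n ` {1..r}))"
    and abelian: "\<forall>u \<in> module.span scale (n ` {1..r}). \<forall>v \<in> module.span scale (n ` {1..r}). b u v = 0"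
    and L_def: "\<forall>i\<in>{1..r}. b x (n i) = (\<Sum>j=1..r. scale (L i j) (n j))"
    and R_def: "\<forall>i\<in>{1..r}. b (n i) x = (\<Sum>j=1..r. scale (R i j) (n j))"
    and sigma_def: "b x x = (\<Sum>j=1..r. scale (\<sigma> j) (n j))"
    and R_jordan: "jordan_form r R"
  shows "(\<forall>j\<in>{1..r}. (\<Sum>i=1..r. R i j * \<sigma> i) = 0)
         \<and> (\<forall>i\<in>{1..r}. \<forall>j\<in>{1..r}. R i j \<noteq> 0 \<longrightarrow> \<sigma> i = 0)"
proof -
  interpret vector_space scale
    using leib unfolding leibniz_algebra_def by blast
  have indep: "independent (n ` {1..r})"
    using basis_indep dependent_mono by blast
  have null: "\<forall>j\<in>{1..r}. (\<Sum>i=1..r. R i j * \<sigma> i) = 0"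
    using independent_image_coeffs_zero[OF indep inj_n finite_atLeastAtMost
        leibniz_square_bracket_right_coords[OF leib R_def sigma_def]] by blast
  then show ?thesis
    using jordan_form_left_null_row[OF R_jordan null] by blast
qed

end
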